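(* Let $p$ be an odd prime. (1) Take $k=0$. For every $s\ge2$, $$\mathcal M_{V_{s+2,0}}=p\,\mathcal M_{V_{s,0}}+(p-1)\,\mathcal M_{V_{s+1,0}}+p^{s-1}(p-1)(p^2-1).$$ (2) Take $k=1$. For every $s\ge3$ and $0\le t\le p-1$, $$\mathcal M_{V_{s+2,t}}=\sum_{t_2=0}^{p-1}\mathcal M_{V_{s,t_2}}+\sum_{t_1=1}^{p-1}\mathcal M_{V_{s+1,t_1}}+b_{s,t},$$ where $b_{s,t}=p^{s-1}(p-1)(p^2+p+t)$ if $0\le t<\frac{p-1}{2}$ and $b_{s,t}=p^{s-1}(p-1)(p^2+t)$ if $\frac{p-1}{2}\le t\le p-1$.
   Context: Fix an odd prime $p$ and an integer $k\ge 0$. For integers $0\le i<n$ write $\lambda(n,i)=(n-i,1^i)$ for the hook partition of $n$ with $n-i$ boxes in its first row and $i$ further boxes in its first column. If $\mu=\lambda(n',i')$ is obtained from $\lambda(n,i)$ by appending $m=(n'-i')-(n-i)\ge 0$ boxes to the first row and $n''=i'-i\ge 0$ boxes to the first column, we say $\mu$ is obtained by adding the block $B_{m,n''}$ ($m$ horizontal nodes, $n''$ vertical nodes). Put $x_s=p^k(sp-(s+1))$. The relevant part ("column $k$") of the $p$-Bratteli diagram is the graded directed graph with vertices: on floor $2k+1$, $S_i=\lambda(p^k(p-1),i)$ for $0\le i<p^k(p-1)$; on floor $2(k+s)$ ($s\ge1$), $V_{s,l}=\lambda\big(p^k(2sp-(2s+1)),\,x_s+l\big)$ for $0\le l<p^k$;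 on floor $2(k+s)-1$ ($s\ge2$), $W_{s,l'}=\lambda\big(p^k((2s-1)p-2s),\,x_{s-1}+l'\big)$ for $0\le l'<p^{k+1}$; and edges, each labelled by the block added: (E1) $S_i\to V_{1,l}$ exactly when $i=p^kt+l$ with $0\le t\le p-2$, block $B_{p^kt,\,p^k(p-2-t)}$; (E2) for $s\ge2$, $0\le l<p^k$, $0\le\beta\le p-1$: $V_{s-1,l}\to W_{s,pl+\beta}$, block $B_{p^k(p-1)-((p-1)l+\beta),\,(p-1)l+\beta}$; (E3) for $s\ge 2$, $0\le l'<p^{k+1}$ and $t=\lfloor l'/p^k\rfloor$: $W_{s,l'}\to V_{s,l'-p^kt}$, block $B_{p^kt,\,p^k(p-1-t)}$. A path ending at a vertex $v$ is a sequence of edges starting at some $S_i$ and going up one floor at a time to $v$ ($S_i\to V_{1,\cdot}\to W_{2,\cdot}\to V_{2,\cdot}\to W_{3,\cdot}\to\cdots\to v$); $\mathcal P(v)$ is the set of all paths ending at $v$. The blocks of a path are numbered $B^2,B^3,\dots,B^N$: $B^2$ is the block of the edge leaving $S_i$, and for $j\ge2$, $B^{2j-1}$ is the block of the edge into $W_{j,\cdot}$ and $B^{2j}$ the block of the edge into $V_{j,\cdot}$. Write $B^j=B_{m_j,n_j}$. Descents: $1\in\mathrm{Des}(P)$ iff $m_2=p^kt$ with $0\le t<\frac{p-1}{2}$; $2\notin\mathrm{Des}(P)$; for $3\le j<N$, $j\in\mathrm{Des}(P)$ iff $m_j>m_{j+1}$ and $n_j<n_{j+1}$. $\mathrm{des}(P)=|\mathrm{Des}(P)|$.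 The $p^k$-Fibonacci number of a vertex $v$ is $\mathcal M_v=\sum_{P\in\mathcal P(v)}\mathrm{des}(P)$. *)

theory Defs
  imports Main "HOL-Computational_Algebra.Primes"
begin

text \<open>Vertices of column k of the p-Bratteli diagram:
  S i = S_i (floor 2k+1), V s l = V_{s,l} (floor 2(k+s)), W s l' = W_{s,l'} (floor 2(k+s)-1).\<close>
datatype vert = S nat | V nat nat | W nat nat

fun is_vertex :: "nat \<Rightarrow> nat \<Rightarrow> vert \<Rightarrow> bool" where
  "is_vertex p k (S i) = (i < p^k * (p - 1))"
| "is_vertex p k (V s l) = (1 \<le> s \<and> l < p^k)"
| "is_vertex p k (W s l') = (2 \<le> s \<and> l' < p^(k+1))"

text \<open>Edges (E1)-(E3), returning the label block B_{m,n} as the pair (m,n);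
  None means there is no edge.\<close>
fun edge :: "nat \<Rightarrow> nat \<Rightarrow> vert \<Rightarrow> vert \<Rightarrow> (nat \<times> nat) option" where
  "edge p k (S i) (V s l) =
     (if s = 1 \<and> l < p^k \<and> (\<exists>t. t \<le> p - 2 \<and> i = p^k * t + l)
      then (let t = i div p^k in Some (p^k * t, p^k * (p - 2 - t)))
      else None)"
| "edge p k (V s0 l) (W s l') =
     (if s \<ge> 2 \<and> s0 + 1 = s \<and> l < p^k \<and> (\<exists>\<beta>. \<beta> \<le> p - 1 \<and> l' = p * l + \<beta>)
      then (let \<beta> = l' - p * l in
            Some (p^k * (p - 1) - ((p - 1) * l + \<beta>), (p - 1) * l + \<beta>))
      else None)"
| "edge p k (W s l') (V s0 l) =
     (if s \<ge> 2 \<and> s0 = s \<and> l' < p^(k+1) \<and> l = l' - p^k * (l' div p^k)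
      then (let t = l' div p^k in Some (p^k * t, p^k * (p - 1 - t)))
      else None)"
| "edge p k _ _ = None"

text \<open>A path ending at v, represented by its list of vertices (edges are determined
  by their endpoints): it starts at some S_i and uses an edge at each step.\<close>
definition paths :: "nat \<Rightarrow> nat \<Rightarrow> vert \<Rightarrow> vert list set" where
  "paths p k v = {vs. vs \<noteq> [] \<and> (\<exists>i. hd vs = S i) \<and> last vs = v
       \<and> (\<forall>u \<in> set vs. is_vertex p k u)
       \<and> (\<forall>j. j + 1 < length vs \<longrightarrow> edge p k (vs ! j) (vs ! (j + 1)) \<noteq> None)}"

text \<open>The blocks of a path: element number (j-2) of this list is B^j = (m_j, n_j).\<close>
definition blocks :: "nat \<Rightarrow> nat \<Rightarrow> vert list \<Rightarrow> (nat \<times> nat) list" where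
  "blocks p k vs = map (\<lambda>j. the (edge p k (vs ! j) (vs ! (j + 1)))) [0..<length vs - 1]"

definition blk :: "nat \<Rightarrow> nat \<Rightarrow> vert list \<Rightarrow> nat \<Rightarrow> nat \<times> nat" where
  "blk p k vs j = blocks p k vs ! (j - 2)"

text \<open>Descent set; the blocks are B^2..B^N with N = length (blocks) + 1.\<close>
definition Des :: "nat \<Rightarrow> nat \<Rightarrow> vert list \<Rightarrow> nat set" where
  "Des p k vs =
     (if \<exists>t. fst (blk p k vs 2) = p^k * t \<and> 2 * t < p - 1 then {1} else {})
     \<union> {j. 3 \<le> j \<and> j < length (blocks p k vs) + 1
            \<and> fst (blk p k vs j) > fst (blk p k vs (j + 1))
            \<and> snd (blk p k vs j) < snd (blk p k vs (j + 1))}"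

definition des :: "nat \<Rightarrow> nat \<Rightarrow> vert list \<Rightarrow> nat" where
  "des p k vs = card (Des p k vs)"

definition M :: "nat \<Rightarrow> nat \<Rightarrow> vert \<Rightarrow> nat" where
  "M p k v = (\<Sum>P \<in> paths p k v. des p k P)"

end

theory Submission
  imports Defs
begin

text \<open>Every vertex above floor \<open>2k+1\<close> is entered from the floor below, so a path into \<open>w\<close> is a
  path into a predecessor \<open>u\<close> followed by the edge \<open>u \<rightarrow> w\<close>, and this last step creates a new
  descent exactly when the blocks of the last two edges \<open>x \<rightarrow> u \<rightarrow> w\<close> form one. Hence
  \<open>M w = \<Sum>u (M u + \<Sum>x |P(x)| [B(x \<rightarrow> u), B(u \<rightarrow> w) is a descent])\<close>,
  where \<open>|P(V s l)| = (p-1) p^(s-1)\<close>. In columns \<open>k = 0, 1\<close> all blocks have \<open>p^k (p-1)\<close> boxes,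
  so a descent is just a drop of the horizontal part, and counting these drops gives the first order
  recurrences \<open>M(V (s+1) 0) = p M(V s 0) + (p-1)^2 p^(s-1)\<close> for \<open>k = 0\<close> and
  \<open>M(V (s+1) b) = \<Sum>a M(V s a) + (p-1) p^(s-2) (p(p-1) + p [2b < p-1] + b)\<close> for \<open>k = 1\<close>.
  The stated recurrences follow by eliminating one step.\<close>

lemma mult_add_less_mult:
  fixes q t l n :: nat
  assumes "t < n" "l < q"
  shows "q * t + l < q * n"
proof -
  have "q * t + l < q * Suc t" using assms(2) by simp
  also have "\<dots> \<le> q * n" using assms(1) by (intro mult_le_mono2) simp
  finally show ?thesis .
qed

lemma mult_add_le_mult:
  fixes q t b n :: nat
  assumes "t < n" "b \<le> q"
  shows "q * t + b \<le> q * n"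
proof -
  have "q * t + b \<le> q * Suc t" using assms(2) by simp
  also have "\<dots> \<le> q * n" using assms(1) by (intro mult_le_mono2) simp
  finally show ?thesis .
qed

lemma mult_add_less_mult_add_iff:
  fixes q t h b r :: nat
  assumes "b < q" "r \<le> q"
  shows "q * t + b < q * h + r \<longleftrightarrow> t < h \<or> (t = h \<and> b < r)"
proof (cases t h rule: linorder_cases)
  case less
  then have "q * t + b < q * h" using assms(1) by (rule mult_add_less_mult)
  then show ?thesis using less by simp
next
  case greater
  then have "q * h + r \<le> q * t"
    using assms(2) mult_le_mono2[of "Suc h" t q] by simp
  then show ?thesis using greater by simp
qed simp

lemma sum_of_bool_lessThan: "(\<Sum>t<n. of_bool (P t)) = card {t. t < n \<and> P t}"
  for n :: nat
proof -
  have "{..<n} \<inter> {t. P t} = {t. t < n \<and> P t}" by auto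
  then show ?thesis by simp
qed

lemma sum_lessThan_odd: "p = 2 * h + 1 \<Longrightarrow> (\<Sum>t<p. t) = p * h"
  for p :: nat
  using Sum_Ico_nat[of 0 p] by (simp add: atLeast0LessThan)

section \<open>Paths as iterated extensions\<close>

text \<open>\<open>level v\<close> is the floor of \<open>v\<close> minus \<open>2k\<close>, so the \<open>S i\<close> are on level 1.\<close>

fun level :: "vert \<Rightarrow> nat" where
  "level (S i) = 1"
| "level (V s l) = 2 * s"
| "level (W s l') = 2 * s - 1"

lemma level_edge: "edge p k u w = Some b \<Longrightarrow> level w = Suc (level u)"
  by (cases u; cases w) (auto split: if_splits)

definition preds :: "nat \<Rightarrow> nat \<Rightarrow> vert \<Rightarrow> vert set" where
  "preds p k w = {u. is_vertex p k u \<and> edge p k u w \<noteq> None}"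

lemma level_preds: "u \<in> preds p k w \<Longrightarrow> level w = Suc (level u)"
  by (auto simp: preds_def dest: level_edge)

lemma paths_nonempty_last: "vs \<in> paths p k v \<Longrightarrow> vs \<noteq> [] \<and> last vs = v \<and> is_vertex p k v"
  by (auto simp: paths_def)

lemma singleton_in_paths_iff:
  "[x] \<in> paths p k v \<longleftrightarrow> x = v \<and> (\<exists>i. v = S i) \<and> is_vertex p k v"
  by (auto simp: paths_def)

lemma snoc_in_paths_iff:
  assumes "us \<noteq> []"
  shows "us @ [w] \<in> paths p k v \<longleftrightarrow>
    v = w \<and> is_vertex p k w \<and> us \<in> paths p k (last us) \<and> edge p k (last us) w \<noteq> None"
proof -
  obtain n where n: "length us = Suc n" using assms by (cases us) auto
  then have last_us: "last us = us ! n" using assms by (simp add: last_conv_nth)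
  have "(\<forall>j. j + 1 < length (us @ [w]) \<longrightarrow> edge p k ((us @ [w]) ! j) ((us @ [w]) ! (j + 1)) \<noteq> None)
    \<longleftrightarrow> (\<forall>j. j < n \<longrightarrow> edge p k (us ! j) (us ! (j + 1)) \<noteq> None) \<and> edge p k (last us) w \<noteq> None"
    using n by (simp add: All_less_Suc nth_append last_us conj_commute)
  then show ?thesis
    unfolding paths_def using assms n by (auto simp: last_us)
qed

lemma paths_S: "is_vertex p k (S i) \<Longrightarrow> paths p k (S i) = {[S i]}"
proof (intro set_eqI iffI)
  fix vs assume vs: "vs \<in> paths p k (S i)"
  then have "vs \<noteq> []" by (simp add: paths_nonempty_last)
  then obtain us x where vs_eq: "vs = us @ [x]" by (metis rev_exhaust)
  have "edge p k u (S i) = None" for u by (cases u) auto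
  then have "us = []" using vs unfolding vs_eq by (metis snoc_in_paths_iff)
  with vs show "vs \<in> {[S i]}" by (simp add: vs_eq singleton_in_paths_iff)
qed (simp add: singleton_in_paths_iff)

lemma paths_snoc_preds:
  assumes "is_vertex p k w" "\<forall>i. w \<noteq> S i"
  shows "paths p k w = (\<Union>u \<in> preds p k w. (\<lambda>us. us @ [w]) ` paths p k u)"
proof (intro set_eqI iffI)
  fix vs assume vs: "vs \<in> paths p k w"
  then have "vs \<noteq> []" by (simp add: paths_nonempty_last)
  then obtain us x where vs_eq: "vs = us @ [x]" by (metis rev_exhaust)
  have "us \<noteq> []" using vs assms(2) by (auto simp: vs_eq singleton_in_paths_iff)
  with vs have "x = w \<and> us \<in> paths p k (last us) \<and> edge p k (last us) w \<noteq> None"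
    unfolding vs_eq by (metis snoc_in_paths_iff)
  then have "x = w" "us \<in> paths p k (last us)" "last us \<in> preds p k w"
    by (auto simp: preds_def dest: paths_nonempty_last)
  then show "vs \<in> (\<Union>u \<in> preds p k w. (\<lambda>us. us @ [w]) ` paths p k u)"
    unfolding vs_eq by blast
next
  fix vs assume "vs \<in> (\<Union>u \<in> preds p k w. (\<lambda>us. us @ [w]) ` paths p k u)"
  then obtain u us where u: "u \<in> preds p k w" and us: "us \<in> paths p k u" and "vs = us @ [w]"
    by blast
  moreover have "us \<noteq> []" "last us = u" using us by (simp_all add: paths_nonempty_last)
  ultimately show "vs \<in> paths p k w"
    using assms(1) us u unfolding preds_def by (simp add: snoc_in_paths_iff del: not_None_eq)
qed

lemma paths_length_level:
  "vs \<in> paths p k v \<Longrightarrow> length vs = level v \<and> (\<forall>u \<in> set vs. is_vertex p k u \<and> level u \<le> level v)"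
proof (induction vs arbitrary: v rule: rev_induct)
  case Nil then show ?case by (simp add: paths_def)
next
  case (snoc x us)
  show ?case
  proof (cases "us = []")
    case True then show ?thesis using snoc.prems by (auto simp: singleton_in_paths_iff)
  next
    case False
    then have "v = x" "is_vertex p k x" "us \<in> paths p k (last us)" "level x = Suc (level (last us))"
      using snoc.prems by (auto simp: snoc_in_paths_iff dest: level_edge)
    then show ?thesis using snoc.IH by fastforce
  qed
qed

lemma finite_vertices_up_to_level: "finite {u. is_vertex p k u \<and> level u \<le> n}"
proof (rule finite_subset)
  show "{u. is_vertex p k u \<and> level u \<le> n} \<subseteq>
    S ` {..<p^k * (p - 1)} \<union> case_prod V ` ({..n} \<times> {..<p^k}) \<union> case_prod W ` ({..n} \<times> {..<p^(k+1)})"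
    (is "_ \<subseteq> ?vertices")
  proof
    fix u assume "u \<in> {u. is_vertex p k u \<and> level u \<le> n}"
    then show "u \<in> ?vertices" by (cases u) force+
  qed
qed simp

lemma finite_paths: "finite (paths p k v)"
proof (rule finite_subset)
  show "paths p k v \<subseteq> {vs. set vs \<subseteq> {u. is_vertex p k u \<and> level u \<le> level v} \<and> length vs = level v}"
    using paths_length_level by fastforce
qed (simp add: finite_lists_length_eq finite_vertices_up_to_level)

lemma finite_preds: "finite (preds p k w)"
proof (rule finite_subset)
  show "preds p k w \<subseteq> {u. is_vertex p k u \<and> level u \<le> level w}"
    by (auto dest: level_preds) (simp add: preds_def)
qed (rule finite_vertices_up_to_level)

lemma sum_paths_snoc:
  assumes "is_vertex p k w" "\<forall>i. w \<noteq> S i"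
  shows "(\<Sum>vs \<in> paths p k w. f vs) = (\<Sum>u \<in> preds p k w. \<Sum>us \<in> paths p k u. f (us @ [w]))"
proof -
  have disjoint: "(\<lambda>us. us @ [w]) ` paths p k u \<inter> (\<lambda>us. us @ [w]) ` paths p k u' = {}" if "u \<noteq> u'" for u u'
    using that by (auto dest: paths_nonempty_last)
  have "(\<Sum>vs \<in> paths p k w. f vs) = (\<Sum>u \<in> preds p k w. \<Sum>vs \<in> (\<lambda>us. us @ [w]) ` paths p k u. f vs)"
    unfolding paths_snoc_preds[OF assms]
    by (rule sum.UNION_disjoint) (auto simp: finite_preds finite_paths disjoint)
  also have "\<dots> = (\<Sum>u \<in> preds p k w. \<Sum>us \<in> paths p k u. f (us @ [w]))"
    by (intro sum.cong refl sum.reindex_cong[where l = "\<lambda>us. us @ [w]"]) (auto intro: inj_onI)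
  finally show ?thesis .
qed

lemma card_paths_snoc:
  assumes "is_vertex p k w" "\<forall>i. w \<noteq> S i"
  shows "card (paths p k w) = (\<Sum>u \<in> preds p k w. card (paths p k u))"
  using sum_paths_snoc[OF assms, of "\<lambda>_. 1::nat"] by simp

section \<open>Descents along a path\<close>

definition descent :: "nat \<times> nat \<Rightarrow> nat \<times> nat \<Rightarrow> bool" where
  "descent b c \<longleftrightarrow> fst c < fst b \<and> snd b < snd c"

lemma length_blocks: "length (blocks p k vs) = length vs - 1"
  by (simp add: blocks_def)

lemma blocks_snoc:
  assumes "us \<noteq> []"
  shows "blocks p k (us @ [w]) = blocks p k us @ [the (edge p k (last us) w)]"
proof -
  obtain n where n: "length us = Suc n" using assms by (cases us) auto
  then have "last us = us ! n" using assms by (simp add: last_conv_nth)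
  then show ?thesis
    using n by (simp add: blocks_def nth_append)
qed

lemma des_eq_sum:
  "des p k vs = of_bool (\<exists>t. fst (blk p k vs 2) = p^k * t \<and> 2 * t < p - 1)
    + (\<Sum>j = 3..<length (blocks p k vs) + 1. of_bool (descent (blk p k vs j) (blk p k vs (j + 1))))"
proof -
  let ?first = "if \<exists>t. fst (blk p k vs 2) = p^k * t \<and> 2 * t < p - 1 then {1::nat} else {}"
  let ?later = "{3..<length (blocks p k vs) + 1} \<inter> {j. descent (blk p k vs j) (blk p k vs (j + 1))}"
  have "Des p k vs = ?first \<union> ?later"
    by (auto simp: Des_def descent_def)
  moreover have "?first \<inter> ?later = {}" by auto
  ultimately have "des p k vs = card ?first + card ?later"
    by (simp add: des_def card_Un_disjoint)
  moreover have "card ?first = of_bool (\<exists>t. fst (blk p k vs 2) = p^k * t \<and> 2 * t < p - 1)"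
    by simp
  ultimately show ?thesis
    by (simp only: sum_of_bool_eq finite_atLeastLessThan of_nat_id)
qed

lemma des_snoc:
  assumes "2 \<le> length us"
  shows "des p k (us @ [w]) =
    des p k us + of_bool (3 \<le> length us \<and> descent (last (blocks p k us)) (the (edge p k (last us) w)))"
proof -
  define n where "n = length (blocks p k us)"
  define b where "b = the (edge p k (last us) w)"
  have n: "n = length us - 1" "1 \<le> n" using assms by (simp_all add: n_def length_blocks)
  have blocks_new: "blocks p k (us @ [w]) = blocks p k us @ [b]"
    using assms by (simp add: b_def blocks_snoc[of us] flip: length_greater_0_conv)
  have blk_old: "blk p k (us @ [w]) j = blk p k us j" if "j \<le> n + 1" for j
  proof -
    have "j - 2 < n" using that n by linarith
    then show ?thesis by (simp add: blk_def blocks_new nth_append_left n_def)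
  qed
  have "last (blocks p k us) = blocks p k us ! (n - 1)"
    using n by (simp add: last_conv_nth n_def flip: length_greater_0_conv)
  moreover have "(blocks p k us @ [b]) ! n = b" by (simp add: n_def)
  ultimately have blk_last: "blk p k (us @ [w]) (n + 1) = last (blocks p k us)" "blk p k (us @ [w]) (n + 2) = b"
    using blk_old[of "n + 1"] n by (simp_all add: blk_def blocks_new)
  have sum_new: "(\<Sum>j = 3..<n + 2. of_bool (descent (blk p k (us @ [w]) j) (blk p k (us @ [w]) (j + 1))))
    = (\<Sum>j = 3..<n + 1. of_bool (descent (blk p k us j) (blk p k us (j + 1))))
      + (of_bool (3 \<le> length us \<and> descent (last (blocks p k us)) b) :: nat)"
  proof (cases "3 \<le> n + 1")
    case True
    then show ?thesis
      using blk_last n by (simp add: sum.atLeastLessThan_Suc blk_old)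
  next
    case False
    then have "\<not> 3 \<le> length us" using n by linarith
    with False show ?thesis by simp
  qed
  have "length (blocks p k (us @ [w])) + 1 = n + 2" "length (blocks p k us) + 1 = n + 1"
    by (simp_all add: blocks_new n_def)
  moreover have "blk p k (us @ [w]) 2 = blk p k us 2" using n by (simp add: blk_old)
  ultimately show ?thesis
    unfolding des_eq_sum[of p k "us @ [w]"] des_eq_sum[of p k us] b_def[symmetric]
    by (simp only: sum_new add.assoc)
qed

lemma sum_last_block:
  assumes "is_vertex p k w" "\<forall>i. w \<noteq> S i"
  shows "(\<Sum>vs \<in> paths p k w. g (last (blocks p k vs)))
    = (\<Sum>u \<in> preds p k w. card (paths p k u) * g (the (edge p k u w)))"
  unfolding sum_paths_snoc[OF assms]
  by (intro sum.cong refl) (simp add: blocks_snoc paths_nonempty_last)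

lemma M_two_step:
  assumes "is_vertex p k w" "4 \<le> level w"
  shows "M p k w = (\<Sum>u \<in> preds p k w. M p k u
    + (\<Sum>x \<in> preds p k u. card (paths p k x) * of_bool (descent (the (edge p k x u)) (the (edge p k u w)))))"
proof -
  have not_S: "\<forall>i. v \<noteq> S i" if "3 \<le> level v" for v using that by auto
  have "M p k w = (\<Sum>u \<in> preds p k w. \<Sum>us \<in> paths p k u. des p k (us @ [w]))"
    unfolding M_def using assms by (intro sum_paths_snoc) auto
  also have "\<dots> = (\<Sum>u \<in> preds p k w. M p k u
      + (\<Sum>us \<in> paths p k u. of_bool (descent (last (blocks p k us)) (the (edge p k u w)))))"
  proof (intro sum.cong refl)
    fix u assume u: "u \<in> preds p k w"
    have "des p k (us @ [w]) = des p k us + of_bool (descent (last (blocks p k us)) (the (edge p k u w)))"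
      if us: "us \<in> paths p k u" for us
    proof -
      have "length us = level u" "last us = u"
        using us by (simp_all add: paths_length_level paths_nonempty_last)
      moreover have "Suc (level u) = level w" using u by (simp add: level_preds)
      ultimately show ?thesis using assms(2) by (simp add: des_snoc)
    qed
    then show "(\<Sum>us \<in> paths p k u. des p k (us @ [w])) = M p k u
      + (\<Sum>us \<in> paths p k u. of_bool (descent (last (blocks p k us)) (the (edge p k u w))))"
      by (simp add: M_def sum.distrib)
  qed
  also have "\<dots> = (\<Sum>u \<in> preds p k w. M p k u
      + (\<Sum>x \<in> preds p k u. card (paths p k x) * of_bool (descent (the (edge p k x u)) (the (edge p k u w)))))"
  proof (intro sum.cong refl arg_cong2[where f = "(+)"] sum_last_block)
    fix u assume u: "u \<in> preds p k w"
    then show "is_vertex p k u" by (simp add: preds_def)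
    show "\<forall>i. u \<noteq> S i" using u assms(2) by (intro not_S) (simp add: level_preds)
  qed
  finally show ?thesis .
qed

section \<open>Column \<open>k\<close>\<close>

text \<open>\<open>block_VW p k l'\<close> is the block of the edge (E2) into \<open>W s l'\<close> and \<open>block_WV p k l'\<close> the block
  of the edge (E3) out of it.\<close>

definition block_VW :: "nat \<Rightarrow> nat \<Rightarrow> nat \<Rightarrow> nat \<times> nat" where
  "block_VW p k l' = (let n = (p - 1) * (l' div p) + l' mod p in (p^k * (p - 1) - n, n))"

definition block_WV :: "nat \<Rightarrow> nat \<Rightarrow> nat \<Rightarrow> nat \<times> nat" where
  "block_WV p k l' = (let t = l' div p^k in (p^k * t, p^k * (p - 1 - t)))"

lemma W_index_less: "t < p \<Longrightarrow> l < p^k \<Longrightarrow> p^k * t + l < p^(k+1)"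
  for p :: nat
  using mult_add_less_mult[of t p l "p^k"] by (simp add: mult.commute)

lemma W_index_div_less: "l' < p^(k+1) \<Longrightarrow> l' div p < p^k"
  for p :: nat
  by (cases "p = 0") (simp_all add: less_mult_imp_div_less mult.commute)

lemma inj_on_W_index: "l < p^k \<Longrightarrow> inj_on (\<lambda>t. W s (p^k * t + l)) A"
  by (intro inj_onI) (metis add_right_cancel mult_left_cancel not_less_zero vert.inject(3))

lemma edge_V_W:
  assumes "2 \<le> s" "l' < p^(k+1)" "0 < p"
  shows "edge p k (V (s - 1) (l' div p)) (W s l') = Some (block_VW p k l')"
proof -
  have "l' mod p < p" using assms(3) by simp
  then have "l' mod p \<le> p - 1" by linarith
  then have "\<exists>\<beta>. \<beta> \<le> p - 1 \<and> l' = p * (l' div p) + \<beta>" by (metis div_mult_mod_eq mult.commute)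
  moreover have "l' - p * (l' div p) = l' mod p" by (simp add: minus_mult_div_eq_mod)
  ultimately show ?thesis
    using assms W_index_div_less[OF assms(2)] by (simp add: block_VW_def Let_def)
qed

lemma edge_W_V:
  assumes "2 \<le> s" "l' < p^(k+1)"
  shows "edge p k (W s l') (V s (l' mod p^k)) = Some (block_WV p k l')"
  using assms by (simp add: block_WV_def Let_def minus_mult_div_eq_mod)

lemma preds_W:
  assumes "2 \<le> s" "l' < p^(k+1)" "0 < p"
  shows "preds p k (W s l') = {V (s - 1) (l' div p)}"
proof (intro set_eqI iffI)
  fix u assume u: "u \<in> preds p k (W s l')"
  show "u \<in> {V (s - 1) (l' div p)}"
  proof (cases u)
    case (V s' l)
    with u obtain \<beta> where "s' + 1 = s" "\<beta> \<le> p - 1" "l' = p * l + \<beta>"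
      by (auto simp: preds_def split: if_splits)
    then show ?thesis using V assms(3) by simp
  qed (use u in \<open>simp_all add: preds_def\<close>)
next
  fix u assume "u \<in> {V (s - 1) (l' div p)}"
  then show "u \<in> preds p k (W s l')"
    using assms edge_V_W[OF assms] W_index_div_less[OF assms(2)] by (simp add: preds_def)
qed

lemma preds_V:
  assumes "2 \<le> s" "l < p^k"
  shows "preds p k (V s l) = (\<lambda>t. W s (p^k * t + l)) ` {..<p}"
proof (intro set_eqI iffI)
  fix u assume u: "u \<in> preds p k (V s l)"
  show "u \<in> (\<lambda>t. W s (p^k * t + l)) ` {..<p}"
  proof (cases u)
    case (W s' l')
    with u have "s' = s" "l' < p^(k+1)" "l = l' mod p^k"
      by (auto simp: preds_def minus_mult_div_eq_mod split: if_splits)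
    moreover have "l' div p^k < p" using \<open>l' < p^(k+1)\<close> by (simp add: less_mult_imp_div_less)
    moreover have "l' = p^k * (l' div p^k) + l' mod p^k" by simp
    ultimately show ?thesis
      using W by (intro image_eqI[where x = "l' div p^k"]) simp_all
  qed (use u assms in \<open>simp_all add: preds_def\<close>)
next
  fix u assume "u \<in> (\<lambda>t. W s (p^k * t + l)) ` {..<p}"
  then obtain t where t: "t < p" and u: "u = W s (p^k * t + l)" by blast
  have "p^k * t + l < p^(k+1)" using t assms(2) by (rule W_index_less)
  moreover have "(p^k * t + l) mod p^k = l" using assms(2) by simp
  ultimately show "u \<in> preds p k (V s l)"
    using assms(1) edge_W_V[of s "p^k * t + l" p k] by (simp add: preds_def u)
qed

lemma preds_V1:
  assumes "2 \<le> p" "l < p^k"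
  shows "preds p k (V 1 l) = (\<lambda>t. S (p^k * t + l)) ` {..p - 2}"
proof (intro set_eqI iffI)
  fix u assume u: "u \<in> preds p k (V 1 l)"
  show "u \<in> (\<lambda>t. S (p^k * t + l)) ` {..p - 2}"
  proof (cases u)
    case (S i)
    with u obtain t where "t \<le> p - 2" "i = p^k * t + l"
      by (auto simp: preds_def split: if_splits)
    then show ?thesis using S by blast
  qed (use u in \<open>auto simp: preds_def\<close>)
next
  fix u assume "u \<in> (\<lambda>t. S (p^k * t + l)) ` {..p - 2}"
  then obtain t where t: "t \<le> p - 2" "u = S (p^k * t + l)" by blast
  have "p^k * t + l < p^k * (p - 1)"
    using t assms by (intro mult_add_less_mult) auto
  then show "u \<in> preds p k (V 1 l)"
    using t assms by (simp add: preds_def exI[of _ t])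
qed

lemma card_paths_W_eq:
  assumes "2 \<le> s" "l' < p^(k+1)" "0 < p"
  shows "card (paths p k (W s l')) = card (paths p k (V (s - 1) (l' div p)))"
  using assms by (simp add: card_paths_snoc preds_W)

lemma card_paths_V:
  assumes "2 \<le> p" "1 \<le> s" "l < p^k"
  shows "card (paths p k (V s l)) = (p - 1) * p^(s - 1)"
  using assms(2,3)
proof (induction s arbitrary: l rule: nat_induct_at_least)
  case base
  have "card (paths p k (V 1 l)) = (\<Sum>u \<in> preds p k (V 1 l). card (paths p k u))"
    using base by (simp add: card_paths_snoc)
  also have "\<dots> = (\<Sum>u \<in> preds p k (V 1 l). 1)"
  proof (intro sum.cong refl)
    fix u assume u: "u \<in> preds p k (V 1 l)"
    then obtain i where "u = S i" using preds_V1[OF assms(1) base] by blast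
    moreover have "is_vertex p k u" using u by (simp add: preds_def)
    ultimately show "card (paths p k u) = 1" by (simp add: paths_S)
  qed
  also have "\<dots> = p - 1"
    unfolding preds_V1[OF assms(1) base] using assms(1) by (simp add: card_image inj_on_def)
  finally show ?case by simp
next
  case (Suc s)
  have "card (paths p k (V (Suc s) l)) = (\<Sum>t<p. card (paths p k (W (Suc s) (p^k * t + l))))"
    using Suc by (simp add: card_paths_snoc preds_V sum.reindex inj_on_W_index)
  also have "\<dots> = (\<Sum>t<p. (p - 1) * p^(s - 1))"
  proof (intro sum.cong refl)
    fix t assume "t \<in> {..<p}"
    then have "p^k * t + l < p^(k+1)" using Suc by (intro W_index_less) auto
    then show "card (paths p k (W (Suc s) (p^k * t + l))) = (p - 1) * p^(s - 1)"
      using Suc assms(1) by (simp add: card_paths_W_eq W_index_div_less)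
  qed
  also have "\<dots> = (p - 1) * p^(Suc s - 1)"
    using Suc by (cases s) (simp_all add: algebra_simps)
  finally show ?case .
qed

lemma card_paths_W:
  assumes "2 \<le> p" "2 \<le> s" "l' < p^(k+1)"
  shows "card (paths p k (W s l')) = (p - 1) * p^(s - 2)"
  using assms by (simp add: card_paths_W_eq card_paths_V W_index_div_less)

lemma M_V_rec:
  assumes "2 \<le> p" "2 \<le> s" "l < p^k"
  shows "M p k (V s l) = (\<Sum>t<p. M p k (W s (p^k * t + l)))
    + (p - 1) * p^(s - 2) * card {t. t < p \<and> descent (block_VW p k (p^k * t + l)) (block_WV p k (p^k * t + l))}"
proof -
  have inner: "(\<Sum>x \<in> preds p k (W s (p^k * t + l)). card (paths p k x)
        * of_bool (descent (the (edge p k x (W s (p^k * t + l)))) (the (edge p k (W s (p^k * t + l)) (V s l)))))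
      = (p - 1) * p^(s - 2) * of_bool (descent (block_VW p k (p^k * t + l)) (block_WV p k (p^k * t + l)))"
    if "t < p" for t
  proof -
    have l': "p^k * t + l < p^(k+1)" using that assms(3) by (rule W_index_less)
    have "(p^k * t + l) mod p^k = l" using assms(3) by simp
    then have "the (edge p k (W s (p^k * t + l)) (V s l)) = block_WV p k (p^k * t + l)"
      using edge_W_V[OF assms(2) l'] by simp
    moreover have "card (paths p k (V (s - 1) ((p^k * t + l) div p))) = (p - 1) * p^(s - 2)"
      using card_paths_W_eq[OF assms(2) l'] card_paths_W[OF assms(1,2) l'] assms(1) by simp
    ultimately show ?thesis
      using assms(1) edge_V_W[OF assms(2) l'] by (simp add: preds_W[OF assms(2) l'])
  qed
  have "M p k (V s l) = (\<Sum>u \<in> preds p k (V s l). M p k u + (\<Sum>x \<in> preds p k u.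
      card (paths p k x) * of_bool (descent (the (edge p k x u)) (the (edge p k u (V s l))))))"
    using assms by (intro M_two_step) auto
  also have "\<dots> = (\<Sum>t<p. M p k (W s (p^k * t + l))
    + (p - 1) * p^(s - 2) * of_bool (descent (block_VW p k (p^k * t + l)) (block_WV p k (p^k * t + l))))"
    unfolding preds_V[OF assms(2,3)] using assms(3)
    by (simp add: sum.reindex inj_on_W_index inner del: edge.simps)
  finally show ?thesis
    by (simp add: sum.distrib flip: sum_distrib_left sum_of_bool_lessThan)
qed

lemma M_W_rec:
  assumes "2 \<le> p" "2 \<le> s" "l' < p^(k+1)"
  shows "M p k (W (s + 1) l') = M p k (V s (l' div p))
    + (p - 1) * p^(s - 2) * card {t. t < p \<and> descent (block_WV p k (p^k * t + l' div p)) (block_VW p k l')}"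
proof -
  define l where "l = l' div p"
  have l: "l < p^k" using assms(3) by (simp add: l_def W_index_div_less)
  have preds: "preds p k (W (Suc s) l') = {V s l}"
    using preds_W[of "s + 1" l' p k] assms by (simp add: l_def)
  have last_edge: "edge p k (V s l) (W (Suc s) l') = Some (block_VW p k l')"
    using edge_V_W[of "s + 1" l' p k] assms by (simp add: l_def)
  have inner: "card (paths p k (W s (p^k * t + l)))
        * of_bool (descent (the (edge p k (W s (p^k * t + l)) (V s l))) (block_VW p k l'))
      = (p - 1) * p^(s - 2) * of_bool (descent (block_WV p k (p^k * t + l)) (block_VW p k l'))"
    if "t < p" for t
  proof -
    have lt: "p^k * t + l < p^(k+1)" using that l by (rule W_index_less)
    have "(p^k * t + l) mod p^k = l" using l by simp
    then show ?thesis
      using edge_W_V[OF assms(2) lt] card_paths_W[OF assms(1,2) lt] by simp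
  qed
  have "M p k (W (s + 1) l') = (\<Sum>u \<in> preds p k (W (s + 1) l'). M p k u + (\<Sum>x \<in> preds p k u.
      card (paths p k x) * of_bool (descent (the (edge p k x u)) (the (edge p k u (W (s + 1) l'))))))"
    using assms by (intro M_two_step) auto
  also have "\<dots> = M p k (V s l)
    + (\<Sum>t<p. (p - 1) * p^(s - 2) * of_bool (descent (block_WV p k (p^k * t + l)) (block_VW p k l')))"
    using l by (simp add: preds preds_V[OF assms(2) l] last_edge sum.reindex inj_on_W_index inner
      del: edge.simps sum_mult_of_bool_eq)
  finally show ?thesis
    by (simp add: l_def flip: sum_distrib_left sum_of_bool_lessThan)
qed

section \<open>Columns \<open>0\<close> and \<open>1\<close>\<close>

lemma descent_iff_fst_less:
  "fst b + snd b = fst c + snd c \<Longrightarrow> descent b c \<longleftrightarrow> fst c < fst b"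
  by (auto simp: descent_def)

lemma block_VW_k0: "t < p \<Longrightarrow> block_VW p 0 t = (p - 1 - t, t)"
  by (simp add: block_VW_def)

lemma block_WV_k0: "t < p \<Longrightarrow> block_WV p 0 t = (t, p - 1 - t)"
  by (simp add: block_WV_def)

lemma block_VW_k1:
  "b < p \<Longrightarrow> block_VW p 1 (p * a + b) = (p * (p - 1) - ((p - 1) * a + b), (p - 1) * a + b)"
  by (simp add: block_VW_def Let_def)

lemma block_WV_k1: "b < p \<Longrightarrow> block_WV p 1 (p * a + b) = (p * a, p * (p - 1 - a))"
  by (simp add: block_WV_def)

lemma descents_V_k0:
  assumes "p = 2 * h + 1"
  shows "card {t. t < p \<and> descent (block_VW p 0 t) (block_WV p 0 t)} = h"
proof -
  have "{t. t < p \<and> descent (block_VW p 0 t) (block_WV p 0 t)} = {..<h}"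
    using assms by (auto simp: block_VW_k0 block_WV_k0 descent_def)
  then show ?thesis by simp
qed

lemma descents_W_k0:
  assumes "l < p"
  shows "card {t. t < p \<and> descent (block_WV p 0 t) (block_VW p 0 l)} = l"
proof -
  have "{t. t < p \<and> descent (block_WV p 0 t) (block_VW p 0 l)} = {p - l..<p}"
    using assms by (auto simp: block_VW_k0 block_WV_k0 descent_def)
  then show ?thesis using assms by simp
qed

lemma descents_V_k1:
  assumes "p = 2 * h + 1" "b < p"
  shows "card {t. t < p \<and> descent (block_VW p 1 (p * t + b)) (block_WV p 1 (p * t + b))}
    = h + of_bool (b < h)"
proof -
  have "descent (block_VW p 1 (p * t + b)) (block_WV p 1 (p * t + b)) \<longleftrightarrow> t < h \<or> (t = h \<and> b < h)"
    if "t < p" for t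
  proof -
    have "(p - 1) * t + b \<le> p * (p - 1)"
      using that assms(2) mult_add_le_mult[of t p b "p - 1"] by (simp add: mult.commute)
    moreover have "p * t + p * (p - 1 - t) = p * (p - 1)"
      using that by (simp flip: add_mult_distrib2)
    ultimately have "descent (block_VW p 1 (p * t + b)) (block_WV p 1 (p * t + b))
        \<longleftrightarrow> p * t + ((p - 1) * t + b) < p * (p - 1)"
      unfolding block_VW_k1[OF assms(2)] block_WV_k1[OF assms(2)]
      by (simp add: descent_iff_fst_less less_diff_conv)
    also have "\<dots> \<longleftrightarrow> (2 * p - 1) * t + b < (2 * p - 1) * h + h"
      using assms(1) by (simp add: algebra_simps)
    also have "\<dots> \<longleftrightarrow> t < h \<or> (t = h \<and> b < h)"
      using assms by (intro mult_add_less_mult_add_iff) auto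
    finally show ?thesis .
  qed
  then have "{t. t < p \<and> descent (block_VW p 1 (p * t + b)) (block_WV p 1 (p * t + b))}
      = {t. t < p \<and> (t < h \<or> (t = h \<and> b < h))}"
    by blast
  also have "\<dots> = {..<h + of_bool (b < h)}"
    using assms(1) by (cases "b < h") auto
  finally show ?thesis by simp
qed

lemma descents_W_k1:
  assumes "a < p" "b < p"
  shows "card {u. u < p \<and> descent (block_WV p 1 (p * u + a)) (block_VW p 1 (p * a + b))}
    = a + of_bool (a < b)"
proof -
  have "descent (block_WV p 1 (p * u + a)) (block_VW p 1 (p * a + b)) \<longleftrightarrow> p - a - of_bool (a < b) \<le> u"
    if "u < p" for u
  proof -
    have "(p - 1) * a + b \<le> p * (p - 1)"
      using assms mult_add_le_mult[of a p b "p - 1"] by (simp add: mult.commute)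
    moreover have "p * u + p * (p - 1 - u) = p * (p - 1)"
      using that by (simp flip: add_mult_distrib2)
    moreover have "p * u + ((p - 1) * a + b) + a = p * (u + a) + b"
      using assms by (cases p) (simp_all add: algebra_simps)
    ultimately have "descent (block_WV p 1 (p * u + a)) (block_VW p 1 (p * a + b))
        \<longleftrightarrow> p * (p - 1) < p * u + ((p - 1) * a + b)"
      unfolding block_VW_k1[OF assms(2)] block_WV_k1[OF assms(1)]
      by (simp add: descent_iff_fst_less less_diff_conv2)
    also have "\<dots> \<longleftrightarrow> \<not> p * (u + a) + b < p * (p - 1) + (a + 1)"
      using \<open>p * u + ((p - 1) * a + b) + a = p * (u + a) + b\<close> by linarith
    also have "\<dots> \<longleftrightarrow> \<not> (u + a < p - 1 \<or> (u + a = p - 1 \<and> b < a + 1))"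
      using assms by (subst mult_add_less_mult_add_iff) auto
    also have "\<dots> \<longleftrightarrow> p - a - of_bool (a < b) \<le> u"
      using assms by auto
    finally show ?thesis .
  qed
  then have "{u. u < p \<and> descent (block_WV p 1 (p * u + a)) (block_VW p 1 (p * a + b))}
      = {p - a - of_bool (a < b)..<p}"
    by auto
  then show ?thesis using assms by simp
qed

lemma M_k0_rec:
  assumes "p = 2 * h + 1" "1 \<le> h" "2 \<le> s"
  shows "M p 0 (V (s + 1) 0) = p * M p 0 (V s 0) + (p - 1)^2 * p^(s - 1)"
proof -
  have p: "2 \<le> p" using assms by simp
  have "M p 0 (W (s + 1) t) = M p 0 (V s 0) + (p - 1) * p^(s - 2) * t" if "t < p" for t
    using M_W_rec[OF p assms(3), of t 0] that descents_W_k0[OF that] by simp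
  then have "(\<Sum>t<p. M p 0 (W (s + 1) t)) = p * M p 0 (V s 0) + (p - 1) * p^(s - 2) * (\<Sum>t<p. t)"
    by (simp add: sum.distrib sum_distrib_left)
  moreover have "M p 0 (V (s + 1) 0) = (\<Sum>t<p. M p 0 (W (s + 1) t)) + (p - 1) * p^(s - 1) * h"
    using M_V_rec[OF p, of "s + 1" 0 0] assms descents_V_k0[OF assms(1)] by simp
  ultimately have "M p 0 (V (s + 1) 0)
      = p * M p 0 (V s 0) + ((p - 1) * p^(s - 2) * (p * h) + (p - 1) * p^(s - 1) * h)"
    using sum_lessThan_odd[OF assms(1)] by simp
  also have "(p - 1) * p^(s - 2) * (p * h) + (p - 1) * p^(s - 1) * h = (p - 1)^2 * p^(s - 1)"
  proof -
    obtain m where "s = m + 2" using assms(3) by (metis add.commute le_add_diff_inverse)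
    moreover have "p - 1 = 2 * h" using assms(1) by simp
    ultimately show ?thesis by (simp add: power2_eq_square algebra_simps)
  qed
  finally show ?thesis .
qed

lemma M_k1_rec:
  assumes "p = 2 * h + 1" "1 \<le> h" "2 \<le> s" "b < p"
  shows "M p 1 (V (s + 1) b)
    = (\<Sum>a<p. M p 1 (V s a)) + (p - 1) * p^(s - 2) * (p * (p - 1) + p * of_bool (b < h) + b)"
proof -
  have p: "2 \<le> p" using assms by simp
  have "M p 1 (W (s + 1) (p * a + b)) = M p 1 (V s a) + (p - 1) * p^(s - 2) * (a + of_bool (a < b))"
    if "a < p" for a
  proof -
    have l': "p * a + b < p^(1+1)" using W_index_less[of a p b 1] that assms(4) by simp
    show ?thesis
      using M_W_rec[OF p assms(3) l'] descents_W_k1[OF that assms(4)] assms(4) by simp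
  qed
  then have "(\<Sum>a<p. M p 1 (W (s + 1) (p * a + b)))
      = (\<Sum>a<p. M p 1 (V s a)) + (p - 1) * p^(s - 2) * ((\<Sum>a<p. a) + (\<Sum>a<p. of_bool (a < b)))"
    by (simp add: sum.distrib sum_distrib_left distrib_left del: sum_of_bool_eq)
  moreover have "(\<Sum>a<p. of_bool (a < b)) = b"
  proof -
    have "{a. a < p \<and> a < b} = {..<b}" using assms(4) by auto
    then show ?thesis by (simp add: sum_of_bool_lessThan)
  qed
  moreover have "M p 1 (V (s + 1) b)
      = (\<Sum>a<p. M p 1 (W (s + 1) (p * a + b))) + (p - 1) * p^(s - 1) * (h + of_bool (b < h))"
    using M_V_rec[OF p, of "s + 1" b 1] assms descents_V_k1[OF assms(1,4)] by simp
  ultimately have "M p 1 (V (s + 1) b) = (\<Sum>a<p. M p 1 (V s a))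
      + ((p - 1) * p^(s - 2) * (p * h + b) + (p - 1) * p^(s - 1) * (h + of_bool (b < h)))"
    using sum_lessThan_odd[OF assms(1)] by simp
  also have "(p - 1) * p^(s - 2) * (p * h + b) + (p - 1) * p^(s - 1) * (h + of_bool (b < h))
      = (p - 1) * p^(s - 2) * (p * (p - 1) + p * of_bool (b < h) + b)"
  proof -
    obtain m where "s = m + 2" using assms(3) by (metis add.commute le_add_diff_inverse)
    moreover have "p - 1 = 2 * h" using assms(1) by simp
    ultimately show ?thesis by (simp add: algebra_simps)
  qed
  finally show ?thesis .
qed

lemma second_order_rec_of_first_order:
  fixes p n A B C :: nat
  assumes "1 \<le> p" "B = p * A + (p - 1)^2 * p^n" "C = p * B + (p - 1)^2 * p^(n + 1)"
  shows "C = p * A + (p - 1) * B + p^n * (p - 1) * (p^2 - 1)"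
proof (cases p)
  case (Suc q)
  then show ?thesis using assms(2,3) by (simp add: power2_eq_square algebra_simps)
qed (use assms(1) in simp)

lemma M_k1_second_order:
  assumes "p = 2 * h + 1" "1 \<le> h" "2 \<le> s" "t < p"
  shows "M p 1 (V (s + 2) t) = (\<Sum>a<p. M p 1 (V s a)) + (\<Sum>a = 1..p - 1. M p 1 (V (s + 1) a))
    + (p - 1) * p^(s - 1) * (p^2 + p * of_bool (t < h) + t)"
proof -
  have square: "p * (p - 1) + p = p^2" using assms(1) by (simp add: power2_eq_square algebra_simps)
  have "{..<p} = insert 0 {1..p - 1}" using assms(1) by auto
  then have "(\<Sum>a<p. M p 1 (V (s + 1) a)) = M p 1 (V (s + 1) 0) + (\<Sum>a = 1..p - 1. M p 1 (V (s + 1) a))"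
    by simp
  moreover have "M p 1 (V (s + 1) 0) = (\<Sum>a<p. M p 1 (V s a)) + (p - 1) * p^(s - 1) * p"
  proof -
    have "M p 1 (V (s + 1) 0) = (\<Sum>a<p. M p 1 (V s a)) + (p - 1) * p^(s - 2) * (p * (p - 1) + p)"
      using M_k1_rec[OF assms(1,2,3), of 0] assms(1,2) by simp
    also have "(p - 1) * p^(s - 2) * (p * (p - 1) + p) = (p - 1) * (p^(s - 2) * p) * p"
      unfolding square by (simp add: power2_eq_square mult_ac)
    also have "p^(s - 2) * p = p^(s - 1)"
      using assms(3) by (metis Suc_diff_Suc Suc_1 Suc_le_lessD diff_Suc_1 power_Suc2)
    finally show ?thesis .
  qed
  moreover have "M p 1 (V (s + 2) t)
      = (\<Sum>a<p. M p 1 (V (s + 1) a)) + (p - 1) * p^(s - 1) * (p * (p - 1) + p * of_bool (t < h) + t)"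
    using M_k1_rec[OF assms(1,2), of "s + 1" t] assms(3,4) by simp
  ultimately show ?thesis
    unfolding square[symmetric] by (simp add: distrib_left)
qed

lemma M_k0_second_order:
  assumes "p = 2 * h + 1" "1 \<le> h" "2 \<le> s"
  shows "M p 0 (V (s + 2) 0)
    = p * M p 0 (V s 0) + (p - 1) * M p 0 (V (s + 1) 0) + p^(s - 1) * (p - 1) * (p^2 - 1)"
  using M_k0_rec[OF assms] M_k0_rec[OF assms(1,2), of "s + 1"] assms
  by (intro second_order_rec_of_first_order) simp_all

theorem mainTheorem13:
  fixes p :: nat
  assumes "prime p" and "odd p"
  shows "(\<forall>s \<ge> 2. M p 0 (V (s + 2) 0)
            = p * M p 0 (V s 0) + (p - 1) * M p 0 (V (s + 1) 0) + p^(s - 1) * (p - 1) * (p^2 - 1))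
       \<and> (\<forall>s \<ge> 3. \<forall>t \<le> p - 1. M p 1 (V (s + 2) t)
            = (\<Sum>t2 = 0..p - 1. M p 1 (V s t2)) + (\<Sum>t1 = 1..p - 1. M p 1 (V (s + 1) t1))
              + (if 2 * t < p - 1 then p^(s - 1) * (p - 1) * (p^2 + p + t)
                 else p^(s - 1) * (p - 1) * (p^2 + t)))"
proof -
  obtain h where p: "p = 2 * h + 1" using \<open>odd p\<close> oddE by blast
  moreover have "2 \<le> p" using \<open>prime p\<close> prime_ge_2_nat by blast
  ultimately have h: "1 \<le> h" by simp
  have "{0..p - 1} = {..<p}" "\<And>t. t \<le> p - 1 \<longleftrightarrow> t < p" "\<And>t. 2 * t < p - 1 \<longleftrightarrow> t < h"
    using p by auto
  then show ?thesis
    using M_k0_second_order[OF p h] M_k1_second_order[OF p h] by (auto simp: mult_ac)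
qed

end
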